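(* For every permutation $\sigma\in\mathfrak S_{m+n}$, $$\mathrm{Ber}^{\mathbf s_{m|n}^\sigma}\big(1+u\,\mathcal T_{m|n}^\sigma\big)=\mathrm{Ber}^{\mathbf s_{m|n}}\big(1+u\,\mathcal T_{m|n}\big).$$
   Context: Fix integers $m\ge1$, $n\ge0$. $I_{m|n}=\{1,\dots,m\}\cup\{\tfrac12,\dots,n-\tfrac12\}$, ordered $1<\dots<m<\tfrac12<\dots<n-\tfrac12$, parity $|i|=2i\bmod2$; $\pi:\{1,\dots,m+n\}\to I_{m|n}$ the order-preserving bijection. $\mathfrak{gl}_{m|n}$ has homogeneous basis $E_{i,j}$ of parity $|i|+|j|$. $A[r]=A\otimes t^r\in\mathfrak{gl}_{m|n}[t,t^{-1}]$, $\mathcal U_-=U(t^{-1}\mathfrak{gl}_{m|n}[t^{-1}])$, $\tau=-\partial_t$ even with $[\tau,A[-r]]=rA[-r-1]$, $u$ an even formal variable; $\mathcal T_{m|n}=[\delta_{i,j}\tau+(-1)^{2\pi(i)}E_{\pi(i),\pi(j)}[-1]]_{i,j=1}^{m+n}$, and $1+u\mathcal T_{m|n}$ is a matrix over $\mathcal U_-[\tau][[u]]$. For a 0-1 sequence $\mathbf s=(s_1,\dots,s_{m+n})$ with $m$ zeros and $n$ ones and a matrix $X=[x_{ij}]$ with $x_{ij}$ homogeneous of parity $s_i+s_j$ all of whose principal quasiminors are defined, $\mathrm{Ber}^{\mathbf s}X=d_1(X)^{(-1)^{s_1}}\cdots d_{m+n}(X)^{(-1)^{s_{m+n}}}$, where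 $d_i(X)$ is the inverse of the $(i,i)$ entry of the inverse of the top-left $i\times i$ submatrix. $\mathbf s_{m|n}=(0^m,1^n)$. For $\sigma\in\mathfrak S_{m+n}$: $\mathbf s^\sigma=(s_{\sigma^{-1}(1)},\dots,s_{\sigma^{-1}(m+n)})$ and $X^\sigma=[x_{\sigma^{-1}(i),\sigma^{-1}(j)}]$. *)

theory Defs
  imports "HOL-Computational_Algebra.Formal_Power_Series" "HOL-Combinatorics.Permutations"
begin

text \<open>Indices are 0-based: index i in {0..<m+n} stands for pi(i+1) in I_{m|n}.
  The parity of index i (equivalently 2 pi(i+1) mod 2) is 0 for i < m and 1 otherwise;
  this is also the sequence s_{m|n}.\<close>

definition par :: "nat \<Rightarrow> nat \<Rightarrow> nat" where
  "par m i = (if i < m then 0 else 1)"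

definition rinv :: "'a::ring_1 \<Rightarrow> 'a" where
  "rinv x = (THE y. x * y = 1 \<and> y * x = 1)"

text \<open>Square k x k matrices as functions nat => nat => 'a (entries outside range ignored).\<close>
definition mmult :: "nat \<Rightarrow> (nat \<Rightarrow> nat \<Rightarrow> 'a::ring_1) \<Rightarrow> (nat \<Rightarrow> nat \<Rightarrow> 'a) \<Rightarrow> nat \<Rightarrow> nat \<Rightarrow> 'a" where
  "mmult k X Y = (\<lambda>i j. \<Sum>l<k. X i l * Y l j)"

definition mat_inv :: "nat \<Rightarrow> (nat \<Rightarrow> nat \<Rightarrow> 'a::ring_1) \<Rightarrow> nat \<Rightarrow> nat \<Rightarrow> 'a" where
  "mat_inv k X = (THE Y. (\<forall>i j. (k \<le> i \<or> k \<le> j) \<longrightarrow> Y i j = 0) \<and>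
      (\<forall>i<k. \<forall>j<k. mmult k X Y i j = (if i = j then 1 else 0)) \<and>
      (\<forall>i<k. \<forall>j<k. mmult k Y X i j = (if i = j then 1 else 0)))"

text \<open>Principal quasiminor d_i(X), i = 1..N: inverse of the (i,i) entry of the inverse of the
  top-left i x i submatrix (0-based entry (i-1,i-1)).\<close>
definition qminor :: "nat \<Rightarrow> (nat \<Rightarrow> nat \<Rightarrow> 'a::ring_1) \<Rightarrow> 'a" where
  "qminor i X = rinv (mat_inv i X (i - 1) (i - 1))"

definition Ber :: "nat \<Rightarrow> (nat \<Rightarrow> nat) \<Rightarrow> (nat \<Rightarrow> nat \<Rightarrow> 'a::ring_1) \<Rightarrow> 'a" where
  "Ber N s X = prod_list (map (\<lambda>i. if s i = 0 then qminor (Suc i) X else rinv (qminor (Suc i) X)) [0..<N])"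

text \<open>Generators of U_-[tau]: e i j r stands for E_{pi(i+1),pi(j+1)}[-r] (r >= 1), tau for tau.
  gen_rels states the defining relations of U(t^{-1} gl_{m|n}[t^{-1}])[tau]:
  the supercommutator relations of the loop Lie superalgebra and [tau, A[-r]] = r A[-r-1].\<close>
definition gen_rels :: "nat \<Rightarrow> nat \<Rightarrow> (nat \<Rightarrow> nat \<Rightarrow> nat \<Rightarrow> 'a::ring_1) \<Rightarrow> 'a \<Rightarrow> bool" where
  "gen_rels m n e tau \<longleftrightarrow>
     (\<forall>i<m+n. \<forall>j<m+n. \<forall>k<m+n. \<forall>l<m+n. \<forall>r\<ge>1. \<forall>s\<ge>1.
        e i j r * e k l s
          - (-1) ^ ((par m i + par m j) * (par m k + par m l)) * (e k l s * e i j r)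
        = (if j = k then e i l (r + s) else 0)
          - (-1) ^ ((par m i + par m j) * (par m k + par m l)) * (if l = i then e k j (r + s) else 0))
   \<and> (\<forall>i<m+n. \<forall>j<m+n. \<forall>r\<ge>1. tau * e i j r - e i j r * tau = of_nat r * e i j (r + 1))"

text \<open>The matrix 1 + u T_{m|n} over A[[u]], with
  T_{ij} = delta_{ij} tau + (-1)^{2 pi(i)} E_{pi(i),pi(j)}[-1].\<close>
definition oneuT :: "nat \<Rightarrow> (nat \<Rightarrow> nat \<Rightarrow> nat \<Rightarrow> 'a::ring_1) \<Rightarrow> 'a \<Rightarrow> nat \<Rightarrow> nat \<Rightarrow> 'a fps" where
  "oneuT m e tau = (\<lambda>i j. Abs_fps (\<lambda>d.
      if d = 0 then (if i = j then 1 else 0)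
      else if d = 1 then (if i = j then tau else 0) + (-1) ^ par m i * e i j 1
      else 0))"

end

theory Submission
  imports Defs "HOL-Library.Function_Algebras"
begin

(* The matrix X = 1 + u T has constant term 1, so X and all its leading blocks are invertible
   over power series, and the supercommutation relations of the generators say exactly that X is a
   super Manin matrix: (1 - P) X_1 X_2 (1 + P) = 0, with P the super flip of V (x) V.
   The Berezinian is an ordered product of quasiminors, so it suffices to treat an adjacent
   transposition (k, k+1). Only the factors d_{k+1}, d_{k+2} change; by block inversion they are
   Schur complements in the 2 x 2 block [a b; c d] of the inverse of the leading (k+2)-block.
   The Manin property passes to the inverse (a u-adic argument, using that 2 is invertible), and
   the resulting commutation relations among a, b, c, d make the two products agree in each of
   the four parity cases. *)

unbundle fps_syntax

lemma if_1_0_mult [simp]: "(if P then 1 else 0) * (b :: 'r::semiring_1) = (if P then b else 0)"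
  and mult_if_1_0 [simp]: "b * (if P then 1 else 0) = (if P then b else 0)"
  by simp_all

definition mprod :: "'i set \<Rightarrow> ('i \<Rightarrow> 'i \<Rightarrow> 'r::semiring_0) \<Rightarrow> ('i \<Rightarrow> 'i \<Rightarrow> 'r) \<Rightarrow> 'i \<Rightarrow> 'i \<Rightarrow> 'r"
  where "mprod I A B = (\<lambda>x z. \<Sum>y\<in>I. A x y * B y z)"

definition mone :: "'i set \<Rightarrow> 'i \<Rightarrow> 'i \<Rightarrow> 'r::{zero,one}"
  where "mone I = (\<lambda>x z. if x \<in> I \<and> x = z then 1 else 0)"

definition vanishes_outside :: "'i set \<Rightarrow> ('i \<Rightarrow> 'i \<Rightarrow> 'r::zero) \<Rightarrow> bool"
  where "vanishes_outside I A \<longleftrightarrow> (\<forall>x z. x \<notin> I \<or> z \<notin> I \<longrightarrow> A x z = 0)"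

lemma mprod_assoc: "finite I \<Longrightarrow> mprod I (mprod I A B) C = mprod I A (mprod I B C)"
  unfolding mprod_def
  by (auto simp: sum_distrib_left sum_distrib_right mult.assoc intro!: ext sum.swap)

lemma mprod_add_left: "mprod I (A + B) C = mprod I A C + mprod I B C"
  unfolding mprod_def fun_eq_iff by (simp add: distrib_right sum.distrib)

lemma mprod_add_right: "mprod I C (A + B) = mprod I C A + mprod I C B"
  unfolding mprod_def fun_eq_iff by (simp add: distrib_left sum.distrib)

lemma mprod_diff_left: "mprod I (A - B) (C :: 'i \<Rightarrow> 'i \<Rightarrow> 'r::ring) = mprod I A C - mprod I B C"
  unfolding mprod_def fun_eq_iff by (simp add: left_diff_distrib sum_subtractf)

lemma mprod_diff_right: "mprod I (C :: 'i \<Rightarrow> 'i \<Rightarrow> 'r::ring) (A - B) = mprod I C A - mprod I C B"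
  unfolding mprod_def fun_eq_iff by (simp add: right_diff_distrib sum_subtractf)

lemma mprod_mone_left:
  assumes "finite I" "vanishes_outside I B"
  shows "mprod I (mone I) B = (B :: 'i \<Rightarrow> 'i \<Rightarrow> 'r::semiring_1)"
proof (intro ext)
  show "mprod I (mone I) B x z = B x z" for x z
    using assms by (cases "x \<in> I") (auto simp: mprod_def mone_def vanishes_outside_def sum.delta)
qed

lemma mprod_mone_right:
  assumes "finite I" "vanishes_outside I A"
  shows "mprod I A (mone I) = (A :: 'i \<Rightarrow> 'i \<Rightarrow> 'r::semiring_1)"
proof (intro ext)
  show "mprod I A (mone I) x z = A x z" for x z
    using assms by (cases "z \<in> I") (auto simp: mprod_def mone_def vanishes_outside_def sum.delta')
qed

lemma mprod_cong:
  "(\<And>x y. x \<in> I \<Longrightarrow> y \<in> I \<Longrightarrow> A x y = A' x y) \<Longrightarrow> (\<And>x y. x \<in> I \<Longrightarrow> y \<in> I \<Longrightarrow> B x y = B' x y)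
    \<Longrightarrow> x \<in> I \<Longrightarrow> z \<in> I \<Longrightarrow> mprod I A B x z = mprod I A' B' x z"
  unfolding mprod_def by (auto intro!: sum.cong)

lemma vanishes_outside_mprod: "vanishes_outside I A \<Longrightarrow> vanishes_outside I B \<Longrightarrow> vanishes_outside I (mprod I A B)"
  unfolding mprod_def vanishes_outside_def by auto

lemma vanishes_outside_mone: "vanishes_outside I (mone I)"
  unfolding vanishes_outside_def mone_def by auto

lemma vanishes_outside_add:
  "vanishes_outside I A \<Longrightarrow> vanishes_outside I B \<Longrightarrow> vanishes_outside I (A + (B :: 'i \<Rightarrow> 'i \<Rightarrow> 'r::monoid_add))"
  unfolding vanishes_outside_def by simp

lemma vanishes_outside_diff:
  "vanishes_outside I A \<Longrightarrow> vanishes_outside I B \<Longrightarrow> vanishes_outside I (A - (B :: 'i \<Rightarrow> 'i \<Rightarrow> 'r::ab_group_add))"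
  unfolding vanishes_outside_def by simp

section \<open>Power series matrices with constant term one\<close>

definition const_id :: "'i set \<Rightarrow> ('i \<Rightarrow> 'i \<Rightarrow> 'a::ring_1 fps) \<Rightarrow> bool"
  where "const_id I X \<longleftrightarrow> (\<forall>i\<in>I. \<forall>j\<in>I. X i j $ 0 = (if i = j then 1 else 0))"

lemma fps_mat_column_eq_0:
  fixes G Z :: "'i \<Rightarrow> 'i \<Rightarrow> 'a::real_algebra_1 fps"
  assumes "finite I" and "c \<noteq> 0"
    and G0: "\<And>x y. x \<in> I \<Longrightarrow> y \<in> I \<Longrightarrow> G x y $ 0 = 0"
    and eq: "\<And>x. x \<in> I \<Longrightarrow> of_nat c * Z x z + mprod I G Z x z = 0"
    and "x \<in> I"
  shows "Z x z = 0"
proof -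
  have "\<forall>x\<in>I. Z x z $ d = 0" for d
  proof (induction d rule: less_induct)
    case (less d)
    show ?case
    proof
      fix x assume x: "x \<in> I"
      have "G x y $ i * Z y z $ (d - i) = 0" if "y \<in> I" "i \<le> d" for y i
        using G0[OF x \<open>y \<in> I\<close>] less[of "d - i"] that by (cases "i = 0") auto
      then have "mprod I G Z x z $ d = 0"
        by (simp add: mprod_def fps_sum_nth fps_mult_nth)
      moreover have "(of_nat c * Z x z + mprod I G Z x z) $ d = 0"
        using eq[OF x] by simp
      ultimately have "real c *\<^sub>R (Z x z $ d) = 0"
        by (simp flip: fps_of_nat add: scaleR_conv_of_real)
      then show "Z x z $ d = 0"
        using \<open>c \<noteq> 0\<close> by simp
    qed
  qed
  then show ?thesis
    using \<open>x \<in> I\<close> by (auto simp: fps_eq_iff)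
qed

function rinv_coeff :: "'i set \<Rightarrow> ('i \<Rightarrow> 'i \<Rightarrow> 'a::ring_1 fps) \<Rightarrow> nat \<Rightarrow> 'i \<Rightarrow> 'i \<Rightarrow> 'a" where
  "rinv_coeff I X d i j = (if d = 0 then (if i = j then 1 else 0)
     else - (\<Sum>l\<in>I. \<Sum>e\<in>{1..d}. X i l $ e * rinv_coeff I X (d - e) l j))"
  by pat_completeness auto
termination by (relation "measure (\<lambda>(I, X, d, i, j). d)") auto

declare rinv_coeff.simps [simp del]

definition fps_mat_rinv :: "'i set \<Rightarrow> ('i \<Rightarrow> 'i \<Rightarrow> 'a::ring_1 fps) \<Rightarrow> 'i \<Rightarrow> 'i \<Rightarrow> 'a fps"
  where "fps_mat_rinv I X = (\<lambda>i j. if i \<in> I \<and> j \<in> I then Abs_fps (\<lambda>d. rinv_coeff I X d i j) else 0)"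

lemma vanishes_outside_fps_mat_rinv: "vanishes_outside I (fps_mat_rinv I X)"
  unfolding vanishes_outside_def fps_mat_rinv_def by auto

lemma const_id_fps_mat_rinv: "const_id I (fps_mat_rinv I X)"
  unfolding const_id_def fps_mat_rinv_def by (auto simp: rinv_coeff.simps)

lemma mprod_fps_mat_rinv:
  assumes "finite I" and X: "const_id I X" and "i \<in> I" "j \<in> I"
  shows "mprod I X (fps_mat_rinv I X) i j = mone I i j"
proof (rule fps_ext)
  fix d
  let ?N = "fps_mat_rinv I X"
  have split: "(\<Sum>e=0..d. X i l $ e * ?N l j $ (d - e))
      = X i l $ 0 * ?N l j $ d + (\<Sum>e\<in>{1..d}. X i l $ e * ?N l j $ (d - e))" for l
  proof -
    have "{0..d} = insert 0 {1..d}" by auto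
    then show ?thesis by simp
  qed
  have "mprod I X ?N i j $ d = (\<Sum>l\<in>I. \<Sum>e=0..d. X i l $ e * ?N l j $ (d - e))"
    by (simp add: mprod_def fps_sum_nth fps_mult_nth)
  also have "\<dots> = ?N i j $ d + (\<Sum>l\<in>I. \<Sum>e\<in>{1..d}. X i l $ e * rinv_coeff I X (d - e) l j)"
    using assms unfolding split const_id_def
    by (simp add: sum.distrib fps_mat_rinv_def sum.delta)
  also have "\<dots> = mone I i j $ d"
    using assms by (auto simp: fps_mat_rinv_def mone_def rinv_coeff.simps[of I X d i j])
  finally show "mprod I X ?N i j $ d = mone I i j $ d" .
qed

text \<open>The right inverse is also a left inverse: \<open>D = N X - 1\<close> satisfies \<open>D + (X - 1) D = X D = 0\<close>,
  and \<open>X - 1\<close> has no constant term.\<close>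

lemma fps_mat_inverse_exists:
  fixes X :: "'i \<Rightarrow> 'i \<Rightarrow> 'a::real_algebra_1 fps"
  assumes fin: "finite I" and X: "const_id I X"
  obtains N where "vanishes_outside I N" "const_id I N"
    "\<And>i j. i \<in> I \<Longrightarrow> j \<in> I \<Longrightarrow> mprod I X N i j = mone I i j"
    "\<And>i j. i \<in> I \<Longrightarrow> j \<in> I \<Longrightarrow> mprod I N X i j = mone I i j"
proof
  let ?N = "fps_mat_rinv I X"
  define D where "D = mprod I ?N X - mone I"
  have right: "mprod I X ?N i j = mone I i j" if "i \<in> I" "j \<in> I" for i j
    using mprod_fps_mat_rinv[OF fin X that] .
  have XD: "mprod I X D x z = 0" if x: "x \<in> I" and z: "z \<in> I" for x z
  proof -
    have "mprod I X (mprod I ?N X) x z = mprod I (mprod I X ?N) X x z"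
      by (simp add: mprod_assoc[OF fin])
    also have "\<dots> = mprod I (mone I) X x z"
      by (rule mprod_cong) (use right x z in auto)
    also have "\<dots> = X x z"
      using x fin by (simp add: mprod_def mone_def sum.delta)
    also have "\<dots> = mprod I X (mone I) x z"
      using z fin by (simp add: mprod_def mone_def sum.delta')
    finally show ?thesis
      by (simp add: D_def mprod_diff_right)
  qed
  have "D x z = 0" if "x \<in> I" "z \<in> I" for x z
  proof (rule fps_mat_column_eq_0[OF fin, of 1 "X - mone I"])
    show "(X - mone I) x y $ 0 = 0" if "x \<in> I" "y \<in> I" for x y
      using X that unfolding const_id_def mone_def by auto
    show "of_nat 1 * D x z + mprod I (X - mone I) D x z = 0" if "x \<in> I" for x
      using XD[OF that \<open>z \<in> I\<close>] that fin
      by (simp add: mprod_def mone_def left_diff_distrib sum_subtractf sum.delta)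
  qed (use that in simp_all)
  then show "mprod I ?N X i j = mone I i j" if "i \<in> I" "j \<in> I" for i j
    using that by (simp add: D_def)
  show "mprod I X ?N i j = mone I i j" if "i \<in> I" "j \<in> I" for i j
    using right[OF that] .
qed (simp_all add: vanishes_outside_fps_mat_rinv const_id_fps_mat_rinv)

lemma rinv_eqI:
  fixes x y :: "'a::ring_1"
  assumes "x * y = 1" "y * x = 1"
  shows "rinv x = y"
  unfolding rinv_def
proof (rule the_equality)
  show "x * y = 1 \<and> y * x = 1" using assms ..
  fix y' assume "x * y' = 1 \<and> y' * x = 1"
  then have "y' = y' * (x * y)" "y' * x * y = y"
    using assms by simp_all
  then show "y' = y" by (simp add: mult.assoc)
qed

lemma fps_rinv:
  fixes x :: "'a::real_algebra_1 fps"
  assumes "x $ 0 = 1"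
  shows "x * rinv x = 1" "rinv x * x = 1" "rinv x $ 0 = 1"
proof -
  have X: "const_id {0::nat} (\<lambda>_ _. x)"
    using assms unfolding const_id_def by simp
  obtain N where N: "const_id {0::nat} N"
    "\<And>i j. i \<in> {0} \<Longrightarrow> j \<in> {0} \<Longrightarrow> mprod {0} (\<lambda>_ _. x) N i j = mone {0} i j"
    "\<And>i j. i \<in> {0} \<Longrightarrow> j \<in> {0} \<Longrightarrow> mprod {0} N (\<lambda>_ _. x) i j = mone {0} i j"
    by (rule fps_mat_inverse_exists[OF _ X]) simp_all
  then have inv: "x * N 0 0 = 1" "N 0 0 * x = 1"
    by (simp_all add: mprod_def mone_def)
  moreover have "rinv x = N 0 0"
    using rinv_eqI[OF inv] .
  moreover have "N 0 0 $ 0 = 1"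
    using N(1) unfolding const_id_def by simp
  ultimately show "x * rinv x = 1" "rinv x * x = 1" "rinv x $ 0 = 1"
    by simp_all
qed

lemma rinv_rinv_fps:
  fixes x :: "'a::real_algebra_1 fps"
  shows "x $ 0 = 1 \<Longrightarrow> rinv (rinv x) = x"
  by (rule rinv_eqI) (simp_all add: fps_rinv)

lemma rinv_mult_fps:
  fixes x y :: "'a::real_algebra_1 fps"
  assumes "x $ 0 = 1" "y $ 0 = 1"
  shows "rinv (x * y) = rinv y * rinv x"
proof (rule rinv_eqI)
  show "x * y * (rinv y * rinv x) = 1"
    using assms by (simp add: mult.assoc flip: mult.assoc[of y] add: fps_rinv)
  show "rinv y * rinv x * (x * y) = 1"
    using assms by (simp add: mult.assoc flip: mult.assoc[of "rinv x"] add: fps_rinv)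
qed

section \<open>Inverses of leading blocks\<close>

definition is_mat_inv :: "nat \<Rightarrow> (nat \<Rightarrow> nat \<Rightarrow> 'a::ring_1) \<Rightarrow> (nat \<Rightarrow> nat \<Rightarrow> 'a) \<Rightarrow> bool" where
  "is_mat_inv k X Y \<longleftrightarrow> (\<forall>i j. (k \<le> i \<or> k \<le> j) \<longrightarrow> Y i j = 0) \<and>
      (\<forall>i<k. \<forall>j<k. mmult k X Y i j = (if i = j then 1 else 0)) \<and>
      (\<forall>i<k. \<forall>j<k. mmult k Y X i j = (if i = j then 1 else 0))"

lemma mmult_eq_mprod: "mmult k X Y = mprod {..<k} X Y"
  unfolding mmult_def mprod_def by simp

lemma is_mat_inv_unique:
  assumes Y: "is_mat_inv k X Y" and Y': "is_mat_inv k X Y'"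
  shows "Y' = Y"
proof (intro ext)
  fix i j
  let ?I = "{..<k}"
  show "Y' i j = Y i j"
  proof (cases "i < k \<and> j < k")
    case False
    then show ?thesis
      using assms unfolding is_mat_inv_def by (metis not_less)
  next
    case True
    have XY: "mprod ?I X Y a b = mone ?I a b" and Y'X: "mprod ?I Y' X a b = mone ?I a b"
      if "a < k" "b < k" for a b
      using assms that unfolding is_mat_inv_def mmult_eq_mprod mone_def by auto
    have "vanishes_outside ?I Y" "vanishes_outside ?I Y'"
      using assms unfolding vanishes_outside_def is_mat_inv_def by (auto simp: not_less)
    then have "Y' i j = mprod ?I Y' (mone ?I) i j" and Y_eq: "mprod ?I (mone ?I) Y i j = Y i j"
      by (simp_all add: mprod_mone_left mprod_mone_right)
    note this(1)
    also have "mprod ?I Y' (mone ?I) i j = mprod ?I Y' (mprod ?I X Y) i j"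
      by (rule mprod_cong) (use True XY in simp_all)
    also have "\<dots> = mprod ?I (mprod ?I Y' X) Y i j"
      by (simp add: mprod_assoc)
    also have "\<dots> = mprod ?I (mone ?I) Y i j"
      by (rule mprod_cong) (use True Y'X in simp_all)
    finally show ?thesis
      using Y_eq by simp
  qed
qed

lemma mat_inv_eqI: "is_mat_inv k X Y \<Longrightarrow> mat_inv k X = Y"
  unfolding mat_inv_def is_mat_inv_def[symmetric]
  by (rule the_equality) (simp_all add: is_mat_inv_unique)

lemma mat_inv_fps:
  fixes X :: "nat \<Rightarrow> nat \<Rightarrow> 'a::real_algebra_1 fps"
  assumes "const_id {..<k} X"
  shows "is_mat_inv k X (mat_inv k X)" "const_id {..<k} (mat_inv k X)"
proof -
  obtain N where N: "vanishes_outside {..<k} N" "const_id {..<k} N"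
    "\<And>i j. i \<in> {..<k} \<Longrightarrow> j \<in> {..<k} \<Longrightarrow> mprod {..<k} X N i j = mone {..<k} i j"
    "\<And>i j. i \<in> {..<k} \<Longrightarrow> j \<in> {..<k} \<Longrightarrow> mprod {..<k} N X i j = mone {..<k} i j"
    by (rule fps_mat_inverse_exists[OF _ assms]) simp_all
  then have "is_mat_inv k X N"
    unfolding is_mat_inv_def vanishes_outside_def mmult_eq_mprod mone_def by (auto simp: not_less)
  moreover have "mat_inv k X = N"
    using mat_inv_eqI[OF calculation] .
  ultimately show "is_mat_inv k X (mat_inv k X)" "const_id {..<k} (mat_inv k X)"
    using N(2) by simp_all
qed

lemma mat_inv_cong:
  assumes "\<And>i j. i < k \<Longrightarrow> j < k \<Longrightarrow> X i j = X' i j"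
  shows "mat_inv k X = mat_inv k X'"
proof -
  have "mmult k X Y i j = mmult k X' Y i j" if "i < k" for i j Y
    unfolding mmult_def by (rule sum.cong) (use assms that in auto)
  moreover have "mmult k Y X i j = mmult k Y X' i j" if "j < k" for i j Y
    unfolding mmult_def by (rule sum.cong) (use assms that in auto)
  ultimately have "is_mat_inv k X = is_mat_inv k X'"
    unfolding is_mat_inv_def by (intro ext) (simp cong: conj_cong)
  then show ?thesis
    unfolding mat_inv_def is_mat_inv_def[symmetric] by simp
qed

lemma mat_inv_permute:
  fixes X :: "nat \<Rightarrow> nat \<Rightarrow> 'a::real_algebra_1 fps"
  assumes X: "const_id {..<k} X" and \<rho>: "\<rho> permutes {..<k}"
  shows "mat_inv k (\<lambda>i j. X (\<rho> i) (\<rho> j)) = (\<lambda>i j. mat_inv k X (\<rho> i) (\<rho> j))"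
proof (rule mat_inv_eqI)
  let ?N = "mat_inv k X"
  have N: "is_mat_inv k X ?N" using mat_inv_fps[OF X] by simp
  have \<rho>_less: "\<rho> i < k \<longleftrightarrow> i < k" for i
    using \<rho> by (metis lessThan_iff permutes_in_image)
  have \<rho>_eq: "\<rho> i = \<rho> j \<longleftrightarrow> i = j" for i j
    using \<rho> by (metis permutes_inj injD)
  have reindex: "mmult k (\<lambda>i j. A (\<rho> i) (\<rho> j)) (\<lambda>i j. B (\<rho> i) (\<rho> j)) i j = mmult k A B (\<rho> i) (\<rho> j)"
    for A B :: "nat \<Rightarrow> nat \<Rightarrow> 'a fps" and i j
    unfolding mmult_def using sum.reindex_bij_betw[OF permutes_imp_bij[OF \<rho>], of "\<lambda>l. A (\<rho> i) l * B l (\<rho> j)"]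
    by simp
  show "is_mat_inv k (\<lambda>i j. X (\<rho> i) (\<rho> j)) (\<lambda>i j. ?N (\<rho> i) (\<rho> j))"
    unfolding is_mat_inv_def reindex
  proof (intro conjI allI impI)
    fix i j
    assume "k \<le> i \<or> k \<le> j"
    then show "?N (\<rho> i) (\<rho> j) = 0"
      using N \<rho>_less unfolding is_mat_inv_def by (meson not_less)
  next
    fix i j
    assume "i < k" "j < k"
    then have "\<rho> i < k" "\<rho> j < k"
      by (simp_all add: \<rho>_less)
    then show "mmult k X ?N (\<rho> i) (\<rho> j) = (if i = j then 1 else 0)"
      and "mmult k ?N X (\<rho> i) (\<rho> j) = (if i = j then 1 else 0)"
      using N unfolding is_mat_inv_def by (simp_all add: \<rho>_eq)
  qed
qed

lemma mat_inv_Schur: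
  fixes X :: "nat \<Rightarrow> nat \<Rightarrow> 'a::real_algebra_1 fps"
  assumes X: "const_id {..<Suc k} X" and "i < k" "j < k"
  defines "N \<equiv> mat_inv (Suc k) X"
  shows "mat_inv k X i j = N i j - N i k * rinv (N k k) * N k j"
proof -
  have N: "is_mat_inv (Suc k) X N" "const_id {..<Suc k} N"
    using mat_inv_fps[OF X] by (simp_all add: N_def)
  then have "N k k $ 0 = 1"
    unfolding const_id_def by simp
  then have Nkk: "N k k * rinv (N k k) = 1" "rinv (N k k) * N k k = 1"
    using fps_rinv by blast+
  have XN: "(\<Sum>l<k. X i l * N l j) = (if i = j then 1 else 0) - X i k * N k j"
    and NX: "(\<Sum>l<k. N i l * X l j) = (if i = j then 1 else 0) - N i k * X k j"
    if "i \<le> k" "j \<le> k" for i j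
    using N(1) that unfolding is_mat_inv_def mmult_def by (simp_all add: algebra_simps)
  define Y where "Y = (\<lambda>i j. if i < k \<and> j < k then N i j - N i k * rinv (N k k) * N k j else 0)"
  have "is_mat_inv k X Y"
    unfolding is_mat_inv_def mmult_def
  proof (intro conjI allI impI)
    fix i j
    assume "k \<le> i \<or> k \<le> j"
    then show "Y i j = 0" unfolding Y_def by auto
  next
    fix i j
    assume ij: "i < k" "j < k"
    let ?ni = "rinv (N k k)"
    have "(\<Sum>l<k. X i l * Y l j) = (\<Sum>l<k. X i l * N l j) - (\<Sum>l<k. X i l * N l k) * (?ni * N k j)"
      using ij by (simp add: Y_def right_diff_distrib mult.assoc sum_subtractf sum_distrib_right)
    also have "\<dots> = (if i = j then 1 else 0) - X i k * N k j + X i k * (N k k * ?ni) * N k j"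
      using ij by (simp add: XN mult.assoc)
    finally show "(\<Sum>l<k. X i l * Y l j) = (if i = j then 1 else 0)"
      by (simp add: Nkk)
    have "(\<Sum>l<k. Y i l * X l j) = (\<Sum>l<k. N i l * X l j) - (N i k * ?ni) * (\<Sum>l<k. N k l * X l j)"
      using ij by (simp add: Y_def left_diff_distrib mult.assoc sum_subtractf sum_distrib_left)
    also have "\<dots> = (if i = j then 1 else 0) - N i k * X k j + N i k * (?ni * N k k) * X k j"
      using ij by (simp add: NX mult.assoc)
    finally show "(\<Sum>l<k. Y i l * X l j) = (if i = j then 1 else 0)"
      by (simp add: Nkk)
  qed
  then show ?thesis
    using \<open>i < k\<close> \<open>j < k\<close> by (simp add: mat_inv_eqI Y_def)
qed

section \<open>Super Manin matrices\<close>

text \<open>With \<open>A = 1 - P\<close> and \<open>B = 1 + P\<close> (so \<open>A B = 0\<close>, \<open>A A = 2 A\<close>, \<open>A + B = 2\<close>) and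
  \<open>Z = A W B\<close>: \<open>A Y Z = A Y (A + B) W B = 2 A B = 0\<close>, while \<open>A Y Z = 2 Z + A (Y - 1) Z\<close>. As
  \<open>Y - 1\<close> has no constant term and \<open>2\<close> is invertible, \<open>Z = 0\<close>.\<close>

lemma projector_sandwich_inverse:
  fixes Y W P :: "'i \<Rightarrow> 'i \<Rightarrow> 'a::real_algebra_1 fps"
  assumes fin: "finite I"
    and vanish: "vanishes_outside I Y" "vanishes_outside I W" "vanishes_outside I P"
    and YW: "mprod I Y W = mone I" and PP: "mprod I P P = mone I"
    and Y0: "\<And>x z. x \<in> I \<Longrightarrow> z \<in> I \<Longrightarrow> Y x z $ 0 = mone I x z $ 0"
    and AYB: "mprod I (mprod I (mone I - P) Y) (mone I + P) = 0"
  shows "mprod I (mprod I (mone I - P) W) (mone I + P) = 0"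
proof -
  let ?A = "mone I - P" and ?B = "mone I + P"
  define Z where "Z = mprod I (mprod I ?A W) ?B"
  note assoc = mprod_assoc[OF fin]
  have vA: "vanishes_outside I ?A" and vB: "vanishes_outside I ?B"
    using vanish by (simp_all add: vanishes_outside_diff vanishes_outside_add vanishes_outside_mone)
  then have vZ: "vanishes_outside I Z"
    unfolding Z_def using vanish by (simp add: vanishes_outside_mprod)
  note unit = mprod_mone_left[OF fin] mprod_mone_right[OF fin] vanishes_outside_mone
  have AA: "mprod I ?A ?A = ?A + ?A" and AB: "mprod I ?A ?B = 0"
    using vanish by (simp_all add: mprod_diff_left mprod_diff_right mprod_add_right unit PP)
  have AYA: "mprod I (mprod I ?A Y) ?A = mprod I ?A Y + mprod I ?A Y"
  proof -
    have "?A = (mone I + mone I) - ?B" by simp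
    then have "mprod I (mprod I ?A Y) ?A = mprod I (mprod I ?A Y) (mone I + mone I) - 0"
      by (metis AYB mprod_diff_right)
    then show ?thesis
      using vA vanish by (simp add: mprod_add_right unit vanishes_outside_mprod)
  qed
  have AYWB: "mprod I (mprod I ?A Y) (mprod I W ?B) = mprod I ?A ?B"
    using vB by (simp add: assoc flip: assoc[of Y W] add: YW unit)
  have "mprod I (mprod I ?A Y) Z = mprod I (mprod I (mprod I ?A Y) ?A) (mprod I W ?B)"
    unfolding Z_def by (simp add: assoc)
  also have "\<dots> = 0"
    unfolding AYA mprod_add_left AYWB AB by simp
  finally have AYZ: "mprod I (mprod I ?A Y) Z = 0" .
  have AZ: "mprod I ?A Z = Z + Z"
  proof -
    have "mprod I ?A Z = mprod I (mprod I ?A ?A) (mprod I W ?B)"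
      unfolding Z_def by (simp add: assoc)
    also have "\<dots> = Z + Z"
      unfolding AA mprod_add_left Z_def by (simp add: assoc)
    finally show ?thesis .
  qed
  have "mprod I ?A Y = ?A + mprod I ?A (Y - mone I)"
    using vA by (simp add: mprod_diff_right unit)
  then have Z_eq: "Z + Z + mprod I (mprod I ?A (Y - mone I)) Z = 0"
    using AYZ by (simp add: mprod_add_left AZ)
  have G0: "mprod I ?A (Y - mone I) x y $ 0 = 0" if "x \<in> I" "y \<in> I" for x y
    using Y0 that by (simp add: mprod_def fps_sum_nth fps_mult_nth)
  have Z2: "of_nat 2 * Z x z + mprod I (mprod I ?A (Y - mone I)) Z x z = 0" for x z
    using fun_cong[OF fun_cong[OF Z_eq, of x], of z] by (simp add: mult_2)
  have "Z x z = 0" if "x \<in> I" for x z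
    by (rule fps_mat_column_eq_0[where c = 2 and G = "mprod I ?A (Y - mone I)"])
      (use fin G0 Z2 that in auto)
  then show ?thesis
    using vZ unfolding Z_def[symmetric] vanishes_outside_def by (metis zero_fun_apply ext)
qed

lemma neg_one_power_commute: "(- 1) ^ n * x = x * ((- 1) ^ n :: 'a::ring_1)"
  by (cases "even n") simp_all

lemma neg_one_power_parity_cong: "even m = even n \<Longrightarrow> (- 1) ^ m = ((- 1) ^ n :: 'a::ring_1)"
  by (cases "even n") simp_all

abbreviation pairs :: "nat \<Rightarrow> (nat \<times> nat) set"
  where "pairs K \<equiv> {..<K} \<times> {..<K}"

definition super_flip :: "nat \<Rightarrow> (nat \<Rightarrow> nat) \<Rightarrow> nat \<times> nat \<Rightarrow> nat \<times> nat \<Rightarrow> 'r::ring_1" where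
  "super_flip K p x y = (if x \<in> pairs K \<and> y = prod.swap x then (- 1) ^ (p (fst x) * p (snd x)) else 0)"

definition pair_mat :: "nat \<Rightarrow> (nat \<Rightarrow> nat \<Rightarrow> nat \<Rightarrow> nat \<Rightarrow> 'r::zero) \<Rightarrow> nat \<times> nat \<Rightarrow> nat \<times> nat \<Rightarrow> 'r" where
  "pair_mat K f x y = (if x \<in> pairs K \<and> y \<in> pairs K then f (fst x) (snd x) (fst y) (snd y) else 0)"

definition flip_sandwich ::
    "nat \<Rightarrow> (nat \<Rightarrow> nat) \<Rightarrow> (nat \<times> nat \<Rightarrow> nat \<times> nat \<Rightarrow> 'r::ring_1) \<Rightarrow> nat \<times> nat \<Rightarrow> nat \<times> nat \<Rightarrow> 'r" where
  "flip_sandwich K p F =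
     mprod (pairs K) (mprod (pairs K) (mone (pairs K) - super_flip K p) F) (mone (pairs K) + super_flip K p)"

definition manin_defect ::
    "(nat \<Rightarrow> nat \<Rightarrow> nat \<Rightarrow> nat \<Rightarrow> 'r::ring_1) \<Rightarrow> (nat \<Rightarrow> nat) \<Rightarrow> nat \<Rightarrow> nat \<Rightarrow> nat \<Rightarrow> nat \<Rightarrow> 'r" where
  "manin_defect f p i k j l = f i k j l - (- 1) ^ (p i * p k) * f k i j l
     + (f i k l j - (- 1) ^ (p i * p k) * f k i l j) * (- 1) ^ (p j * p l)"

lemma vanishes_outside_super_flip: "vanishes_outside (pairs K) (super_flip K p)"
  unfolding vanishes_outside_def super_flip_def by auto

lemma vanishes_outside_pair_mat: "vanishes_outside (pairs K) (pair_mat K f)"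
  unfolding vanishes_outside_def pair_mat_def by auto

lemma mprod_super_flip_left:
  assumes "x \<in> pairs K"
  shows "mprod (pairs K) (super_flip K p) A x z = (- 1) ^ (p (fst x) * p (snd x)) * A (prod.swap x) z"
proof -
  have "prod.swap x \<in> pairs K" using assms by auto
  then show ?thesis
    using assms by (simp add: mprod_def super_flip_def if_distrib[of "\<lambda>c. c * _"] sum.delta' cong: if_cong)
qed

lemma mprod_super_flip_right:
  assumes "z \<in> pairs K"
  shows "mprod (pairs K) A (super_flip K p) x z = A x (prod.swap z) * (- 1) ^ (p (fst z) * p (snd z))"
proof -
  have "mprod (pairs K) A (super_flip K p) x z
      = (\<Sum>y\<in>pairs K. if y = prod.swap z then A x (prod.swap z) * (- 1) ^ (p (fst z) * p (snd z)) else 0)"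
    unfolding mprod_def using assms by (intro sum.cong) (auto simp: super_flip_def mult.commute)
  moreover have "prod.swap z \<in> pairs K" using assms by auto
  ultimately show ?thesis by simp
qed

lemma super_flip_squared: "mprod (pairs K) (super_flip K p) (super_flip K p) = (mone (pairs K) :: _ \<Rightarrow> _ \<Rightarrow> 'r::ring_1)"
proof (intro ext)
  fix x z :: "nat \<times> nat"
  show "mprod (pairs K) (super_flip K p) (super_flip K p) x z = (mone (pairs K) x z :: 'r)"
  proof (cases "x \<in> pairs K")
    case True
    then show ?thesis
      by (cases x; cases z) (auto simp: mprod_super_flip_left super_flip_def mone_def mult.commute
          simp flip: power_add)
  qed (simp add: mprod_def super_flip_def mone_def)
qed

lemma flip_sandwich_pair_mat:
  assumes "x \<in> pairs K" "z \<in> pairs K"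
  shows "flip_sandwich K p (pair_mat K f) x z = manin_defect f p (fst x) (snd x) (fst z) (snd z)"
proof -
  let ?P = "super_flip K p" and ?F = "pair_mat K f"
  have fin: "finite (pairs K)" by simp
  define Q where "Q = mprod (pairs K) (mone (pairs K) - ?P) ?F"
  have Q: "Q y w = ?F y w - (- 1) ^ (p (fst y) * p (snd y)) * ?F (prod.swap y) w" if "y \<in> pairs K" for y w
    unfolding Q_def mprod_diff_left mprod_mone_left[OF fin vanishes_outside_pair_mat]
    using mprod_super_flip_left[OF that] by simp
  have "vanishes_outside (pairs K) Q"
    unfolding Q_def by (intro vanishes_outside_mprod vanishes_outside_diff vanishes_outside_mone
        vanishes_outside_super_flip vanishes_outside_pair_mat)
  then have "flip_sandwich K p ?F x z = Q x z + Q x (prod.swap z) * (- 1) ^ (p (fst z) * p (snd z))"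
    unfolding flip_sandwich_def Q_def[symmetric] mprod_add_right
    by (simp add: mprod_mone_right[OF fin] mprod_super_flip_right[OF assms(2)])
  then show ?thesis
    using assms by (cases x; cases z) (simp add: Q pair_mat_def manin_defect_def mult.commute)
qed

lemma flip_sandwich_pair_mat_eq_0_iff:
  "flip_sandwich K p (pair_mat K f) = 0 \<longleftrightarrow> (\<forall>i<K. \<forall>k<K. \<forall>j<K. \<forall>l<K. manin_defect f p i k j l = 0)"
proof
  assume "flip_sandwich K p (pair_mat K f) = 0"
  then show "\<forall>i<K. \<forall>k<K. \<forall>j<K. \<forall>l<K. manin_defect f p i k j l = 0"
    using flip_sandwich_pair_mat[of "(i, k)" K "(j, l)" p f for i k j l] by auto
next
  assume defect: "\<forall>i<K. \<forall>k<K. \<forall>j<K. \<forall>l<K. manin_defect f p i k j l = 0"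
  have "vanishes_outside (pairs K) (flip_sandwich K p (pair_mat K f))"
    unfolding flip_sandwich_def by (intro vanishes_outside_mprod vanishes_outside_diff vanishes_outside_add
        vanishes_outside_mone vanishes_outside_super_flip vanishes_outside_pair_mat)
  show "flip_sandwich K p (pair_mat K f) = 0"
  proof (intro ext)
    fix x z
    show "flip_sandwich K p (pair_mat K f) x z = 0 x z"
    proof (cases "x \<in> pairs K \<and> z \<in> pairs K")
      case True
      then show ?thesis
        using defect flip_sandwich_pair_mat[of x K z p f] by (cases x; cases z) auto
    next
      case False
      then show ?thesis
        using \<open>vanishes_outside (pairs K) _\<close> unfolding vanishes_outside_def by (cases x; cases z) auto
    qed
  qed
qed

text \<open>Entry \<open>((i, k), (j, l))\<close> of the super tensor square \<open>M\<^sub>1 M\<^sub>2 = M \<otimes> M\<close> with its Koszul sign,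
  and of \<open>N\<^sub>2 N\<^sub>1\<close>, which inverts \<open>M\<^sub>1 M\<^sub>2\<close> when \<open>N\<close> inverts \<open>M\<close>.\<close>

definition stensor_coeff :: "(nat \<Rightarrow> nat) \<Rightarrow> (nat \<Rightarrow> nat \<Rightarrow> 'r::ring_1) \<Rightarrow> nat \<Rightarrow> nat \<Rightarrow> nat \<Rightarrow> nat \<Rightarrow> 'r"
  where "stensor_coeff p M i k j l = (- 1) ^ (p j * (p k + p l)) * (M i j * M k l)"

definition stensor_rev_coeff :: "(nat \<Rightarrow> nat) \<Rightarrow> (nat \<Rightarrow> nat \<Rightarrow> 'r::ring_1) \<Rightarrow> nat \<Rightarrow> nat \<Rightarrow> nat \<Rightarrow> nat \<Rightarrow> 'r"
  where "stensor_rev_coeff p N i k j l = (- 1) ^ (p i * (p k + p l)) * (N k l * N i j)"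

text \<open>\<open>super_manin K p M\<close> is the entrywise form of \<open>(1 - P) M\<^sub>1 M\<^sub>2 (1 + P) = 0\<close>, where \<open>P\<close> is the
  super flip of \<open>V \<otimes> V\<close> for the parity function \<open>p\<close>.\<close>

definition super_manin :: "nat \<Rightarrow> (nat \<Rightarrow> nat) \<Rightarrow> (nat \<Rightarrow> nat \<Rightarrow> 'r::ring_1) \<Rightarrow> bool"
  where "super_manin K p M \<longleftrightarrow> (\<forall>i<K. \<forall>k<K. \<forall>j<K. \<forall>l<K. manin_defect (stensor_coeff p M) p i k j l = 0)"

definition super_manin_rev :: "nat \<Rightarrow> (nat \<Rightarrow> nat) \<Rightarrow> (nat \<Rightarrow> nat \<Rightarrow> 'r::ring_1) \<Rightarrow> bool"
  where "super_manin_rev K p N \<longleftrightarrow> (\<forall>i<K. \<forall>k<K. \<forall>j<K. \<forall>l<K. manin_defect (stensor_rev_coeff p N) p i k j l = 0)"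

lemma mprod_stensor_stensor_rev:
  fixes M N :: "nat \<Rightarrow> nat \<Rightarrow> 'r::ring_1"
  assumes MN: "\<And>i j. i < K \<Longrightarrow> j < K \<Longrightarrow> (\<Sum>l<K. M i l * N l j) = (if i = j then 1 else 0)"
  shows "mprod (pairs K) (pair_mat K (stensor_coeff p M)) (pair_mat K (stensor_rev_coeff p N)) = mone (pairs K)"
proof (intro ext)
  fix x z :: "nat \<times> nat"
  show "mprod (pairs K) (pair_mat K (stensor_coeff p M)) (pair_mat K (stensor_rev_coeff p N)) x z = mone (pairs K) x z"
  proof (cases "x \<in> pairs K \<and> z \<in> pairs K")
    case False
    then show ?thesis by (auto simp: mprod_def pair_mat_def mone_def)
  next
    case True
    then obtain i k j l where x: "x = (i, k)" and z: "z = (j, l)" and "i < K" "k < K" "j < K" "l < K"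
      by (cases x; cases z) auto
    have sign: "(- 1) ^ (p a * (p k + p b) + p a * (p b + p l)) = ((- 1) ^ (p a * (p k + p l)) :: 'r)" for a b
    proof -
      have "p a * (p k + p b) + p a * (p b + p l) = p a * (p k + p l) + 2 * (p a * p b)"
        by (simp add: algebra_simps)
      then show ?thesis
        by (simp add: neg_one_power_parity_cong)
    qed
    have signs: "(- 1) ^ m * X * ((- 1) ^ n * Y) = (- 1) ^ (m + n) * (X * Y)" for m n and X Y :: 'r
      by (metis mult.assoc power_add neg_one_power_commute)
    have "mprod (pairs K) (pair_mat K (stensor_coeff p M)) (pair_mat K (stensor_rev_coeff p N)) x z
        = (\<Sum>a<K. \<Sum>b<K. (- 1) ^ (p a * (p k + p b)) * (M i a * M k b)
            * ((- 1) ^ (p a * (p b + p l)) * (N b l * N a j)))"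
      using True by (simp add: x z mprod_def pair_mat_def stensor_coeff_def stensor_rev_coeff_def
          sum.cartesian_product split_def)
    also have "\<dots> = (\<Sum>a<K. \<Sum>b<K. (- 1) ^ (p a * (p k + p l)) * (M i a * (M k b * N b l) * N a j))"
      unfolding signs sign by (simp only: mult.assoc)
    also have "\<dots> = (\<Sum>a<K. (- 1) ^ (p a * (p k + p l)) * (M i a * (\<Sum>b<K. M k b * N b l) * N a j))"
      by (simp add: sum_distrib_left sum_distrib_right)
    also have "\<dots> = (if k = l then \<Sum>a<K. M i a * N a j else 0)"
      using MN[OF \<open>k < K\<close> \<open>l < K\<close>] by (simp add: neg_one_power_parity_cong[of _ 0])
    also have "\<dots> = mone (pairs K) x z"
      using MN[OF \<open>i < K\<close> \<open>j < K\<close>] True by (auto simp: x z mone_def)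
    finally show ?thesis .
  qed
qed

lemma super_manin_rev_inverse:
  fixes M N :: "nat \<Rightarrow> nat \<Rightarrow> 'a::real_algebra_1 fps"
  assumes M: "const_id {..<K} M" "super_manin K p M"
    and MN: "\<And>i j. i < K \<Longrightarrow> j < K \<Longrightarrow> (\<Sum>l<K. M i l * N l j) = (if i = j then 1 else 0)"
  shows "super_manin_rev K p N"
proof -
  have "flip_sandwich K p (pair_mat K (stensor_rev_coeff p N)) = 0"
    unfolding flip_sandwich_def
  proof (rule projector_sandwich_inverse[OF _ vanishes_outside_pair_mat vanishes_outside_pair_mat
        vanishes_outside_super_flip mprod_stensor_stensor_rev[OF MN] super_flip_squared])
    show "pair_mat K (stensor_coeff p M) x z $ 0 = mone (pairs K) x z $ 0"
      if "x \<in> pairs K" "z \<in> pairs K" for x z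
      using M(1) that unfolding const_id_def
      by (cases x; cases z) (auto simp: pair_mat_def stensor_coeff_def mone_def)
    show "mprod (pairs K) (mprod (pairs K) (mone (pairs K) - super_flip K p) (pair_mat K (stensor_coeff p M)))
        (mone (pairs K) + super_flip K p) = 0"
      using M(2) unfolding super_manin_def flip_sandwich_pair_mat_eq_0_iff[symmetric] flip_sandwich_def .
  qed simp
  then show ?thesis
    unfolding super_manin_rev_def flip_sandwich_pair_mat_eq_0_iff .
qed

section \<open>Transposing two adjacent indices\<close>

lemma fps_add_self_eq_0:
  fixes w :: "'a::real_algebra_1 fps"
  assumes "w + w = 0"
  shows "w = 0"
proof (rule fps_ext)
  fix n
  have "(2::real) *\<^sub>R w $ n = 0"
    using arg_cong[OF assms, of "\<lambda>f. f $ n"] by (simp add: scaleR_2)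
  then show "w $ n = 0 $ n" by simp
qed

lemma super_manin_rev_2x2:
  fixes N :: "nat \<Rightarrow> nat \<Rightarrow> 'a::real_algebra_1 fps"
  assumes N: "super_manin_rev K p N" and "x < K" "y < K" and "p x \<le> 1" "p y \<le> 1"
  defines "a \<equiv> N x x" and "b \<equiv> N x y" and "c \<equiv> N y x" and "d \<equiv> N y y"
  shows "p x = 0 \<Longrightarrow> a * c = c * a"
    and "p y = 0 \<Longrightarrow> b * d = d * b"
    and "p x = 1 \<Longrightarrow> a * b = b * a"
    and "p y = 1 \<Longrightarrow> c * d = d * c"
    and "p x = 0 \<Longrightarrow> p y = 1 \<Longrightarrow> c * c = 0"
    and "p x = 1 \<Longrightarrow> p y = 0 \<Longrightarrow> b * b = 0"
    and "p x = 0 \<Longrightarrow> p y = 0 \<Longrightarrow> d * a - a * d = b * c - c * b"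
    and "p x = 0 \<Longrightarrow> p y = 1 \<Longrightarrow> d * a - a * d = - (b * c + c * b)"
    and "p x = 1 \<Longrightarrow> p y = 0 \<Longrightarrow> d * a - a * d = b * c + c * b"
    and "p x = 1 \<Longrightarrow> p y = 1 \<Longrightarrow> d * a - a * d = c * b - b * c"
proof -
  have R: "manin_defect (stensor_rev_coeff p N) p i k j l = 0" if "i < K" "k < K" "j < K" "l < K" for i k j l
    using N that unfolding super_manin_rev_def by blast
  note defect = manin_defect_def stensor_rev_coeff_def a_def b_def c_def d_def
  have px: "p x = 0 \<or> p x = 1" and py: "p y = 0 \<or> p y = 1"
    using \<open>p x \<le> 1\<close> \<open>p y \<le> 1\<close> by auto
  show "a * c = c * a" if "p x = 0"
  proof -
    have "(c * a - a * c) + (c * a - a * c) = 0"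
      using R[OF \<open>x < K\<close> \<open>y < K\<close> \<open>x < K\<close> \<open>x < K\<close>] that by (simp add: defect algebra_simps)
    then have "c * a - a * c = 0" by (rule fps_add_self_eq_0)
    then show ?thesis by simp
  qed
  show "b * d = d * b" if "p y = 0"
  proof -
    have "(d * b - b * d) + (d * b - b * d) = 0"
      using R[OF \<open>x < K\<close> \<open>y < K\<close> \<open>y < K\<close> \<open>y < K\<close>] that by (simp add: defect algebra_simps)
    then have "d * b - b * d = 0" by (rule fps_add_self_eq_0)
    then show ?thesis by simp
  qed
  show "a * b = b * a" if "p x = 1"
  proof -
    have "(a * b - b * a) + (a * b - b * a) = 0"
      using R[OF \<open>x < K\<close> \<open>x < K\<close> \<open>x < K\<close> \<open>y < K\<close>] that py by (auto simp: defect algebra_simps)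
    then have "a * b - b * a = 0" by (rule fps_add_self_eq_0)
    then show ?thesis by simp
  qed
  show "c * d = d * c" if "p y = 1"
  proof -
    have "(d * c - c * d) + (d * c - c * d) = 0"
      using R[OF \<open>y < K\<close> \<open>y < K\<close> \<open>x < K\<close> \<open>y < K\<close>] that px by (auto simp: defect algebra_simps)
    then have "d * c - c * d = 0" by (rule fps_add_self_eq_0)
    then show ?thesis by simp
  qed
  show "c * c = 0" if "p x = 0" "p y = 1"
  proof -
    have "manin_defect (stensor_rev_coeff p N) p y y x x = - ((c * c + c * c) + (c * c + c * c))"
      using that by (simp add: defect algebra_simps)
    then have "(c * c + c * c) + (c * c + c * c) = 0"
      using R[OF \<open>y < K\<close> \<open>y < K\<close> \<open>x < K\<close> \<open>x < K\<close>] by (metis neg_equal_0_iff_equal)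
    then show ?thesis by (rule fps_add_self_eq_0[OF fps_add_self_eq_0])
  qed
  show "b * b = 0" if "p x = 1" "p y = 0"
  proof -
    have "manin_defect (stensor_rev_coeff p N) p x x y y = - ((b * b + b * b) + (b * b + b * b))"
      using that by (simp add: defect algebra_simps)
    then have "(b * b + b * b) + (b * b + b * b) = 0"
      using R[OF \<open>x < K\<close> \<open>x < K\<close> \<open>y < K\<close> \<open>y < K\<close>] by (metis neg_equal_0_iff_equal)
    then show ?thesis by (rule fps_add_self_eq_0[OF fps_add_self_eq_0])
  qed
  show "d * a - a * d = b * c - c * b" if "p x = 0" "p y = 0"
  proof -
    have "manin_defect (stensor_rev_coeff p N) p x y x y = (d * a - a * d) - (b * c - c * b)"
      using that by (simp add: defect algebra_simps)
    then show ?thesis using R[OF \<open>x < K\<close> \<open>y < K\<close> \<open>x < K\<close> \<open>y < K\<close>] by simp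
  qed
  show "d * a - a * d = - (b * c + c * b)" if "p x = 0" "p y = 1"
  proof -
    have "manin_defect (stensor_rev_coeff p N) p x y x y = (d * a - a * d) + (b * c + c * b)"
      using that by (simp add: defect algebra_simps)
    then show ?thesis using R[OF \<open>x < K\<close> \<open>y < K\<close> \<open>x < K\<close> \<open>y < K\<close>] by (simp only: eq_neg_iff_add_eq_0)
  qed
  show "d * a - a * d = b * c + c * b" if "p x = 1" "p y = 0"
  proof -
    have "manin_defect (stensor_rev_coeff p N) p x y x y = (d * a - a * d) - (b * c + c * b)"
      using that by (simp add: defect algebra_simps)
    then show ?thesis using R[OF \<open>x < K\<close> \<open>y < K\<close> \<open>x < K\<close> \<open>y < K\<close>] by simp
  qed
  show "d * a - a * d = c * b - b * c" if "p x = 1" "p y = 1"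
  proof -
    have "manin_defect (stensor_rev_coeff p N) p x y x y = (d * a - a * d) - (c * b - b * c)"
      using that by (simp add: defect algebra_simps)
    then show ?thesis using R[OF \<open>x < K\<close> \<open>y < K\<close> \<open>x < K\<close> \<open>y < K\<close>] by simp
  qed
qed

lemma Schur_swap_even_even:
  fixes a b c d ai di :: "'r::ring_1"
  assumes "a * ai = 1" "d * di = 1"
    and ac: "a * c = c * a" and bd: "b * d = d * b" and da: "d * a - a * d = b * c - c * b"
  shows "d * (a - b * di * c) = a * (d - c * ai * b)"
proof -
  have "d * (a - b * di * c) = d * a - d * b * di * c" by (simp add: algebra_simps)
  also have "d * b * di * c = b * (d * di) * c" using bd by (metis mult.assoc)
  finally have dS: "d * (a - b * di * c) = d * a - b * c" using assms(2) by simp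
  have "a * (d - c * ai * b) = a * d - a * c * ai * b" by (simp add: algebra_simps)
  also have "a * c * ai * b = c * (a * ai) * b" using ac by (simp add: mult.assoc)
  finally have aT: "a * (d - c * ai * b) = a * d - c * b" using assms(1) by simp
  show ?thesis
    unfolding dS aT using da by (simp add: algebra_simps)
qed

lemma Schur_swap_even_odd:
  fixes a b c d ai di :: "'r::ring_1"
  assumes "a * ai = 1" "di * d = 1"
    and ac: "a * c = c * a" and cc: "c * c = 0" and cd: "c * d = d * c"
    and da: "d * a - a * d = - (b * c + c * b)"
  shows "(a - b * di * c) * (d - c * ai * b) = d * a"
proof -
  have "(a - b * di * c) * (d - c * ai * b)
      = a * d - a * c * ai * b - b * di * c * d + b * di * (c * c) * ai * b"
    by (simp add: algebra_simps)
  also have "a * c * ai * b = c * (a * ai) * b" using ac by (simp add: mult.assoc)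
  also have "b * di * c * d = b * (di * d) * c" using cd by (simp add: mult.assoc)
  finally have "(a - b * di * c) * (d - c * ai * b) = a * d - c * b - b * c"
    using assms(1,2) cc by simp
  also have "\<dots> = d * a"
    using da by (simp add: algebra_simps)
  finally show ?thesis .
qed

lemma Schur_swap_odd_even:
  fixes a b c d ai di :: "'r::ring_1"
  assumes "ai * a = 1" "d * di = 1"
    and ab: "a * b = b * a" and bb: "b * b = 0" and bd: "b * d = d * b"
    and da: "d * a - a * d = b * c + c * b"
  shows "(d - c * ai * b) * (a - b * di * c) = a * d"
proof -
  have "(d - c * ai * b) * (a - b * di * c)
      = d * a - d * b * di * c - c * ai * b * a + c * ai * (b * b) * di * c"
    by (simp add: algebra_simps)
  also have "d * b * di * c = b * (d * di) * c" using bd by (metis mult.assoc)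
  also have "c * ai * b * a = c * (ai * a) * b" using ab by (simp add: mult.assoc)
  finally have "(d - c * ai * b) * (a - b * di * c) = d * a - b * c - c * b"
    using assms(1,2) bb by simp
  also have "\<dots> = a * d"
    using da by (simp add: algebra_simps)
  finally show ?thesis .
qed

lemma Schur_swap_odd_odd:
  fixes a b c d ai di :: "'r::ring_1"
  assumes "ai * a = 1" "di * d = 1"
    and ab: "a * b = b * a" and cd: "c * d = d * c" and da: "d * a - a * d = c * b - b * c"
  shows "(a - b * di * c) * d = (d - c * ai * b) * a"
proof -
  have "(a - b * di * c) * d = a * d - b * di * (c * d)" by (simp add: algebra_simps)
  also have "b * di * (c * d) = b * (di * d) * c" unfolding cd by (simp add: mult.assoc)
  finally have Sd: "(a - b * di * c) * d = a * d - b * c" using assms(2) by simp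
  have "(d - c * ai * b) * a = d * a - c * ai * (b * a)" by (simp add: algebra_simps)
  also have "c * ai * (b * a) = c * (ai * a) * b" unfolding ab[symmetric] by (simp add: mult.assoc)
  finally have Ta: "(d - c * ai * b) * a = d * a - c * b" using assms(1) by simp
  show ?thesis
    unfolding Sd Ta using da by (simp add: algebra_simps)
qed

text \<open>For the indices \<open>x = k, y = k + 1\<close>, the quasiminors \<open>d\<^sub>k\<^sub>+\<^sub>1, d\<^sub>k\<^sub>+\<^sub>2\<close> are
  \<open>S\<inverse>, d\<inverse>\<close> before the swap and \<open>T\<inverse>, a\<inverse>\<close> after it, where \<open>S = a - b d\<inverse> c\<close> and
  \<open>T = d - c a\<inverse> b\<close> are the Schur complements of the block \<open>[a b; c d]\<close> of the inverse.\<close>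

lemma super_manin_rev_Schur_swap:
  fixes N :: "nat \<Rightarrow> nat \<Rightarrow> 'a::real_algebra_1 fps"
  assumes N: "super_manin_rev K p N" "const_id {..<K} N"
    and xy: "x < K" "y < K" "x \<noteq> y" and p: "p x \<le> 1" "p y \<le> 1"
  defines "a \<equiv> N x x" and "b \<equiv> N x y" and "c \<equiv> N y x" and "d \<equiv> N y y"
  shows "(if p x = 0 then rinv (a - b * rinv d * c) else a - b * rinv d * c) * (if p y = 0 then rinv d else d)
       = (if p y = 0 then rinv (d - c * rinv a * b) else d - c * rinv a * b) * (if p x = 0 then rinv a else a)"
proof -
  define S where "S = a - b * rinv d * c"
  define T where "T = d - c * rinv a * b"
  have coeff0: "a $ 0 = 1" "d $ 0 = 1" "b $ 0 = 0" "c $ 0 = 0"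
    using N(2) xy unfolding const_id_def a_def b_def c_def d_def by auto
  then have ST0: "S $ 0 = 1" "T $ 0 = 1"
    by (simp_all add: S_def T_def)
  note inv = fps_rinv[OF coeff0(1)] fps_rinv[OF coeff0(2)]
  note rel = super_manin_rev_2x2[OF N(1) xy(1,2) p, folded a_def b_def c_def d_def]
  have "p x = 0 \<or> p x = 1" "p y = 0 \<or> p y = 1" using p by auto
  then consider "p x = 0" "p y = 0" | "p x = 0" "p y = 1" | "p x = 1" "p y = 0" | "p x = 1" "p y = 1"
    by (elim disjE) auto
  then show ?thesis
  proof cases
    case 1
    have "d * S = a * T"
      unfolding S_def T_def using inv 1 by (intro Schur_swap_even_even) (simp_all add: rel)
    then have "rinv S * rinv d = rinv T * rinv a"
      using coeff0 ST0 by (metis rinv_mult_fps)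
    then show ?thesis using 1 by (simp add: S_def T_def)
  next
    case 2
    have ST: "S * T = d * a"
      unfolding S_def T_def using inv 2 by (intro Schur_swap_even_odd) (simp_all add: rel)
    have "rinv S * d = rinv S * (d * a) * rinv a"
      using inv by (simp add: mult.assoc)
    also have "\<dots> = T * rinv a"
      using fps_rinv[OF ST0(1)] by (simp flip: ST add: mult.assoc flip: mult.assoc[of "rinv S"])
    finally show ?thesis using 2 by (simp add: S_def T_def)
  next
    case 3
    have TS: "T * S = a * d"
      unfolding S_def T_def using inv 3 by (intro Schur_swap_odd_even) (simp_all add: rel)
    have "S * rinv d = rinv T * (T * S) * rinv d"
      using fps_rinv[OF ST0(2)] by (simp flip: mult.assoc)
    also have "\<dots> = rinv T * a"
      using inv by (simp add: TS mult.assoc)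
    finally show ?thesis using 3 by (simp add: S_def T_def)
  next
    case 4
    have "S * d = T * a"
      unfolding S_def T_def using inv 4 by (intro Schur_swap_odd_odd) (simp_all add: rel)
    then show ?thesis using 4 by (simp add: S_def T_def)
  qed
qed

definition ber_factor :: "(nat \<Rightarrow> nat) \<Rightarrow> (nat \<Rightarrow> nat \<Rightarrow> 'a::ring_1) \<Rightarrow> nat \<Rightarrow> 'a"
  where "ber_factor s X i = (if s i = 0 then qminor (Suc i) X else rinv (qminor (Suc i) X))"

lemma Ber_eq_prod_ber_factor: "Ber N s X = prod_list (map (ber_factor s X) [0..<N])"
  unfolding Ber_def ber_factor_def ..

lemma ber_factor_pair_Schur:
  fixes X :: "nat \<Rightarrow> nat \<Rightarrow> 'a::real_algebra_1 fps"
  assumes X: "const_id {..<Suc (Suc k)} X"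
  defines "N \<equiv> mat_inv (Suc (Suc k)) X"
  shows "ber_factor s X k * ber_factor s X (Suc k)
    = (let S = N k k - N k (Suc k) * rinv (N (Suc k) (Suc k)) * N (Suc k) k; d = N (Suc k) (Suc k)
       in (if s k = 0 then rinv S else S) * (if s (Suc k) = 0 then rinv d else d))"
proof -
  have "const_id {..<Suc (Suc k)} N"
    using mat_inv_fps[OF X] by (simp add: N_def)
  then have "N k k $ 0 = 1" "N (Suc k) (Suc k) $ 0 = 1" "N k (Suc k) $ 0 = 0"
    unfolding const_id_def by auto
  moreover have "qminor (Suc k) X = rinv (N k k - N k (Suc k) * rinv (N (Suc k) (Suc k)) * N (Suc k) k)"
    unfolding qminor_def N_def using mat_inv_Schur[OF X, of k k] by simp
  moreover have "qminor (Suc (Suc k)) X = rinv (N (Suc k) (Suc k))"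
    unfolding qminor_def N_def by simp
  ultimately show ?thesis
    by (simp add: ber_factor_def rinv_rinv_fps Let_def)
qed

lemma const_id_permute:
  assumes "const_id {..<K} X" "\<rho> permutes {..<K}"
  shows "const_id {..<K} (\<lambda>i j. X (\<rho> i) (\<rho> j))"
proof -
  have "\<rho> i < K \<longleftrightarrow> i < K" "\<rho> i = \<rho> j \<longleftrightarrow> i = j" for i j
    using assms(2) by (metis lessThan_iff permutes_in_image, metis permutes_inj injD)
  then show ?thesis
    using assms(1) unfolding const_id_def by simp
qed

lemma super_manin_permute:
  assumes "super_manin K p X" "\<rho> permutes {..<K}"
  shows "super_manin K (\<lambda>i. p (\<rho> i)) (\<lambda>i j. X (\<rho> i) (\<rho> j))"
proof -
  have "\<rho> i < K" if "i < K" for i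
    using assms(2) that by (metis lessThan_iff permutes_in_image)
  then show ?thesis
    using assms(1) unfolding super_manin_def manin_defect_def stensor_coeff_def by simp
qed

lemma ber_factor_pair_swap:
  fixes X :: "nat \<Rightarrow> nat \<Rightarrow> 'a::real_algebra_1 fps"
  assumes X: "const_id {..<Suc (Suc k)} X" "super_manin (Suc (Suc k)) p X"
    and p: "p k \<le> 1" "p (Suc k) \<le> 1"
  defines "\<tau> \<equiv> Transposition.transpose k (Suc k)"
  shows "ber_factor (\<lambda>i. p (\<tau> i)) (\<lambda>i j. X (\<tau> i) (\<tau> j)) k * ber_factor (\<lambda>i. p (\<tau> i)) (\<lambda>i j. X (\<tau> i) (\<tau> j)) (Suc k)
       = ber_factor p X k * ber_factor p X (Suc k)"
proof -
  let ?K = "Suc (Suc k)"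
  define N where "N = mat_inv ?K X"
  have \<tau>: "\<tau> permutes {..<?K}" and \<tau>_k: "\<tau> k = Suc k" "\<tau> (Suc k) = k"
    unfolding \<tau>_def by (auto intro: permutes_swap_id)
  have N: "is_mat_inv ?K X N" "const_id {..<?K} N"
    using mat_inv_fps[OF X(1)] by (simp_all add: N_def)
  define S where "S = N k k - N k (Suc k) * rinv (N (Suc k) (Suc k)) * N (Suc k) k"
  define T where "T = N (Suc k) (Suc k) - N (Suc k) k * rinv (N k k) * N k (Suc k)"
  have "super_manin_rev ?K p N"
    using N(1) unfolding is_mat_inv_def mmult_def by (intro super_manin_rev_inverse[OF X]) auto
  then have swap: "(if p k = 0 then rinv S else S) * (if p (Suc k) = 0 then rinv (N (Suc k) (Suc k)) else N (Suc k) (Suc k))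
    = (if p (Suc k) = 0 then rinv T else T) * (if p k = 0 then rinv (N k k) else N k k)"
    unfolding S_def T_def
    by (rule super_manin_rev_Schur_swap[where x = k and y = "Suc k", OF _ N(2) _ _ _ p]) simp_all
  have "ber_factor p X k * ber_factor p X (Suc k)
      = (if p k = 0 then rinv S else S) * (if p (Suc k) = 0 then rinv (N (Suc k) (Suc k)) else N (Suc k) (Suc k))"
    using ber_factor_pair_Schur[OF X(1), of p] by (simp add: S_def N_def Let_def)
  moreover have "mat_inv ?K (\<lambda>i j. X (\<tau> i) (\<tau> j)) = (\<lambda>i j. N (\<tau> i) (\<tau> j))"
    unfolding N_def by (rule mat_inv_permute[OF X(1) \<tau>])
  then have "ber_factor (\<lambda>i. p (\<tau> i)) (\<lambda>i j. X (\<tau> i) (\<tau> j)) k * ber_factor (\<lambda>i. p (\<tau> i)) (\<lambda>i j. X (\<tau> i) (\<tau> j)) (Suc k)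
      = (if p (Suc k) = 0 then rinv T else T) * (if p k = 0 then rinv (N k k) else N k k)"
    using ber_factor_pair_Schur[OF const_id_permute[OF X(1) \<tau>], of "\<lambda>i. p (\<tau> i)"]
    by (simp add: \<tau>_k T_def Let_def)
  ultimately show ?thesis
    using swap by simp
qed

lemma const_id_subset: "const_id J X \<Longrightarrow> I \<subseteq> J \<Longrightarrow> const_id I X"
  unfolding const_id_def by blast

lemma super_manin_mono: "super_manin K p X \<Longrightarrow> K' \<le> K \<Longrightarrow> super_manin K' p X"
  unfolding super_manin_def by auto

lemma ber_factor_transpose_other:
  fixes X :: "nat \<Rightarrow> nat \<Rightarrow> 'a::real_algebra_1 fps"
  assumes X: "const_id {..<Suc i} X" and "i \<noteq> k" "i \<noteq> Suc k"
  defines "\<tau> \<equiv> Transposition.transpose k (Suc k)"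
  shows "ber_factor (\<lambda>j. p (\<tau> j)) (\<lambda>a b. X (\<tau> a) (\<tau> b)) i = ber_factor p X i"
proof -
  have \<tau>_i: "\<tau> i = i"
    using assms by simp
  have "mat_inv (Suc i) (\<lambda>a b. X (\<tau> a) (\<tau> b)) i i = mat_inv (Suc i) X i i"
  proof (cases "i < k")
    case True
    then have "\<tau> a = a" if "a < Suc i" for a
      using that by (simp add: \<tau>_def)
    then show ?thesis
      by (simp add: mat_inv_cong[of "Suc i" "\<lambda>a b. X (\<tau> a) (\<tau> b)" X])
  next
    case False
    then have "\<tau> permutes {..<Suc i}"
      using assms unfolding \<tau>_def by (intro permutes_swap_id) auto
    then show ?thesis
      using mat_inv_permute[OF X] \<tau>_i by simp
  qed
  then show ?thesis
    by (simp add: ber_factor_def qminor_def \<tau>_i)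
qed

lemma Ber_transpose_adjacent:
  fixes X :: "nat \<Rightarrow> nat \<Rightarrow> 'a::real_algebra_1 fps"
  assumes X: "const_id {..<K} X" "super_manin K p X" and p: "\<And>i. p i \<le> 1" and k: "Suc k < K"
  defines "\<tau> \<equiv> Transposition.transpose k (Suc k)"
  shows "Ber K (\<lambda>i. p (\<tau> i)) (\<lambda>i j. X (\<tau> i) (\<tau> j)) = Ber K p X"
proof -
  let ?f = "ber_factor (\<lambda>i. p (\<tau> i)) (\<lambda>i j. X (\<tau> i) (\<tau> j))" and ?g = "ber_factor p X"
  have "[0..<K] = [0..<k] @ [k..<K]"
    using upt_add_eq_append[of 0 k "K - k"] k by simp
  also have "[k..<K] = k # Suc k # [Suc (Suc k)..<K]"
    using k by (simp add: upt_conv_Cons)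
  finally have split: "[0..<K] = [0..<k] @ k # Suc k # [Suc (Suc k)..<K]" .
  have other: "?f i = ?g i" if "i \<in> set [0..<k] \<union> set [Suc (Suc k)..<K]" for i
    using that k unfolding \<tau>_def by (intro ber_factor_transpose_other const_id_subset[OF X(1)]) auto
  have "?f k * ?f (Suc k) = ?g k * ?g (Suc k)"
    unfolding \<tau>_def using k by (intro ber_factor_pair_swap const_id_subset[OF X(1)] super_manin_mono[OF X(2)] p) auto
  moreover have "Ber K s Y = prod_list (map (ber_factor s Y) [0..<k])
      * ((ber_factor s Y k * ber_factor s Y (Suc k)) * prod_list (map (ber_factor s Y) [Suc (Suc k)..<K]))"
    for s and Y :: "nat \<Rightarrow> nat \<Rightarrow> 'a fps"
    unfolding Ber_eq_prod_ber_factor split by (simp add: mult.assoc)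
  moreover have "map ?f [0..<k] = map ?g [0..<k]" "map ?f [Suc (Suc k)..<K] = map ?g [Suc (Suc k)..<K]"
    by (rule map_cong[OF refl], rule other, simp)+
  ultimately show ?thesis
    by (simp only:)
qed

lemma permutes_adjacent_transpositions_induct:
  assumes "\<sigma> permutes {..<n}" and "P id"
    and step: "\<And>\<rho> k. \<rho> permutes {..<n} \<Longrightarrow> P \<rho> \<Longrightarrow> Suc k < n \<Longrightarrow> P (\<rho> \<circ> Transposition.transpose k (Suc k))"
  shows "P \<sigma>"
proof -
  have adj: "P (\<rho> \<circ> apply_adj_transps xs)"
    if "\<rho> permutes {..<n}" "P \<rho>" "\<forall>x\<in>set xs. Suc x < n" for \<rho> xs
    using that(3)
  proof (induction xs rule: rev_induct)
    case Nil
    then show ?case using that by simp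
  next
    case (snoc x xs)
    have "\<rho> \<circ> apply_adj_transps xs permutes {..<n}"
      using snoc.prems that(1) by (intro permutes_compose permutes_apply_adj_transps) auto
    moreover have "Suc x < n" "\<forall>y\<in>set xs. Suc y < n"
      using snoc.prems by simp_all
    ultimately have "P ((\<rho> \<circ> apply_adj_transps xs) \<circ> Transposition.transpose x (Suc x))"
      using step snoc.IH by blast
    then show ?case
      by (metis apply_adj_transps_snoc o_assoc Suc_eq_plus1)
  qed
  show ?thesis
    using finite_lessThan assms(1)
  proof (induction rule: permutes_rev_induct)
    case id
    then show ?case by (fact \<open>P id\<close>)
  next
    case (swap a b \<rho>)
    have "Transposition.transpose a b = apply_adj_transps (adj_transp_seq (min a b) (max a b))"
      using swap.hyps(3) by (simp add: adj_transp_seq_correct min_def max_def transpose_commute)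
    moreover have "\<forall>x\<in>set (adj_transp_seq (min a b) (max a b)). Suc x < n"
      using swap.hyps set_adj_transp_seq[of "min a b" "max a b"] by (auto simp: min_def max_def)
    ultimately show ?case
      using adj[OF swap.hyps(4) swap.IH] by (simp only:)
  qed
qed

lemma Ber_permute:
  fixes X :: "nat \<Rightarrow> nat \<Rightarrow> 'a::real_algebra_1 fps"
  assumes X: "const_id {..<K} X" "super_manin K p X" and p: "\<And>i. p i \<le> 1" and \<sigma>: "\<sigma> permutes {..<K}"
  shows "Ber K (\<lambda>i. p (\<sigma> i)) (\<lambda>i j. X (\<sigma> i) (\<sigma> j)) = Ber K p X"
proof (rule permutes_adjacent_transpositions_induct[OF \<sigma>,
      where P = "\<lambda>\<sigma>. Ber K (\<lambda>i. p (\<sigma> i)) (\<lambda>i j. X (\<sigma> i) (\<sigma> j)) = Ber K p X"])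
  fix \<rho> k
  assume \<rho>: "\<rho> permutes {..<K}" and IH: "Ber K (\<lambda>i. p (\<rho> i)) (\<lambda>i j. X (\<rho> i) (\<rho> j)) = Ber K p X"
    and "Suc k < K"
  let ?\<tau> = "Transposition.transpose k (Suc k)"
  have "Ber K (\<lambda>i. p (\<rho> (?\<tau> i))) (\<lambda>i j. X (\<rho> (?\<tau> i)) (\<rho> (?\<tau> j)))
      = Ber K (\<lambda>i. p (\<rho> i)) (\<lambda>i j. X (\<rho> i) (\<rho> j))"
    using Ber_transpose_adjacent[OF const_id_permute[OF X(1) \<rho>] super_manin_permute[OF X(2) \<rho>] p \<open>Suc k < K\<close>] .
  then show "Ber K (\<lambda>i. p ((\<rho> \<circ> ?\<tau>) i)) (\<lambda>i j. X ((\<rho> \<circ> ?\<tau>) i) ((\<rho> \<circ> ?\<tau>) j)) = Ber K p X"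
    unfolding o_def IH .
qed simp

section \<open>The matrix 1 + u T\<close>

lemma par_cases: "par m i = 0 \<or> par m i = 1"
  unfolding par_def by auto

definition Tmat :: "nat \<Rightarrow> (nat \<Rightarrow> nat \<Rightarrow> nat \<Rightarrow> 'a::ring_1) \<Rightarrow> 'a \<Rightarrow> nat \<Rightarrow> nat \<Rightarrow> 'a"
  where "Tmat m e tau i j = (if i = j then tau else 0) + (- 1) ^ par m i * e i j 1"

lemma oneuT_coeff:
  "oneuT m e tau i j $ d = (if d = 0 then (if i = j then 1 else 0) else if d = 1 then Tmat m e tau i j else 0)"
  unfolding oneuT_def Tmat_def by simp

lemma const_id_oneuT: "const_id I (oneuT m e tau)"
  unfolding const_id_def oneuT_coeff by simp

lemma oneuT_mult_coeff:
  "(oneuT m e tau i j * oneuT m e tau k l) $ d =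
    (if d = 0 then (if i = j then 1 else 0) * (if k = l then 1 else 0)
     else if d = 1 then (if i = j then 1 else 0) * Tmat m e tau k l + Tmat m e tau i j * (if k = l then 1 else 0)
     else if d = 2 then Tmat m e tau i j * Tmat m e tau k l else 0)"
proof -
  let ?A = "oneuT m e tau i j" and ?B = "oneuT m e tau k l"
  have prod: "(?A * ?B) $ d = (\<Sum>t=0..d. ?A $ t * ?B $ (d - t))"
    by (rule fps_mult_nth)
  consider "d = 0" | "d = 1" | "d = 2" | "d \<ge> 3" by linarith
  then show ?thesis
  proof cases
    case 3
    then have "{0..d} = {0, 1, 2}" by auto
    then show ?thesis
      unfolding prod using 3 by (simp add: oneuT_coeff)
  next
    case 4
    have "?A $ t * ?B $ (d - t) = 0" for t
      using 4 by (cases "t \<ge> 2") (auto simp: oneuT_coeff)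
    then show ?thesis
      unfolding prod using 4 by simp
  qed (simp_all add: prod oneuT_coeff)
qed

lemma Tmat_supercommutator:
  fixes e :: "nat \<Rightarrow> nat \<Rightarrow> nat \<Rightarrow> 'a::ring_1"
  assumes G: "gen_rels m n e tau" and idx: "i < m + n" "j < m + n" "k < m + n" "l < m + n"
  defines "\<epsilon> \<equiv> (- 1) ^ ((par m i + par m j) * (par m k + par m l)) :: 'a"
  shows "Tmat m e tau i j * Tmat m e tau k l - \<epsilon> * (Tmat m e tau k l * Tmat m e tau i j)
    = (if i = j then (- 1) ^ par m k * e k l 2 else 0) - (if k = l then (- 1) ^ par m i * e i j 2 else 0)
      + (- 1) ^ par m i * ((- 1) ^ par m k * ((if j = k then e i l 2 else 0) - \<epsilon> * (if l = i then e k j 2 else 0)))"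
proof -
  define si :: 'a where "si = (- 1) ^ par m i"
  define sk :: 'a where "sk = (- 1) ^ par m k"
  have loop: "e i j 1 * e k l 1 - \<epsilon> * (e k l 1 * e i j 1)
      = (if j = k then e i l 2 else 0) - \<epsilon> * (if l = i then e k j 2 else 0)"
    using G idx unfolding gen_rels_def \<epsilon>_def by (simp add: numeral_2_eq_2)
  have tau: "tau * e a b 1 - e a b 1 * tau = e a b 2" if "a < m + n" "b < m + n" for a b
    using G that unfolding gen_rels_def by (simp add: numeral_2_eq_2)
  have "\<epsilon> = 1" if "i = j \<or> k = l"
    using that unfolding \<epsilon>_def by auto
  moreover have "si = 1 \<or> si = - 1" "sk = 1 \<or> sk = - 1"
    unfolding si_def sk_def using par_cases[of m i] par_cases[of m k] by auto
  ultimately have "Tmat m e tau i j * Tmat m e tau k l - \<epsilon> * (Tmat m e tau k l * Tmat m e tau i j)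
     = (if i = j then sk * (tau * e k l 1 - e k l 1 * tau) else 0)
       - (if k = l then si * (tau * e i j 1 - e i j 1 * tau) else 0)
       + si * (sk * (e i j 1 * e k l 1 - \<epsilon> * (e k l 1 * e i j 1)))"
    unfolding Tmat_def si_def[symmetric] sk_def[symmetric]
    by (cases "i = j"; cases "k = l"; elim disjE; simp add: algebra_simps)
  then show ?thesis
    unfolding loop tau[OF idx(3,4)] tau[OF idx(1,2)] si_def sk_def by simp
qed

lemma fps_nth_neg_one_power_mult:
  "((- 1) ^ n * f) $ d = (- 1) ^ n * f $ d" "(f * (- 1) ^ n) $ d = f $ d * (- 1) ^ n"
  for f :: "'a::ring_1 fps"
  by (cases "even n"; simp)+

lemma manin_defect_fps_nth:
  "manin_defect f p i k j l $ d = manin_defect (\<lambda>a b c g. f a b c g $ d) p i k j l"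
  unfolding manin_defect_def by (simp add: fps_nth_neg_one_power_mult)

text \<open>The \<open>u\<^sup>2\<close>-coefficient of the Manin relation for \<open>1 + u T\<close>: the supercommutators of the
  entries of \<open>T\<close> produce terms \<open>E[-2]\<close> that cancel in pairs.\<close>

lemma manin_defect_Tmat:
  fixes e :: "nat \<Rightarrow> nat \<Rightarrow> nat \<Rightarrow> 'a::ring_1"
  assumes G: "gen_rels m n e tau" and idx: "i < m + n" "k < m + n" "j < m + n" "l < m + n"
  shows "manin_defect (\<lambda>a b c f. (- 1) ^ (par m c * (par m b + par m f)) * (Tmat m e tau a c * Tmat m e tau b f))
    (par m) i k j l = 0"
proof -
  let ?p = "par m" and ?T = "Tmat m e tau"
  define \<epsilon>1 :: 'a where "\<epsilon>1 = (- 1) ^ ((?p i + ?p j) * (?p k + ?p l))"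
  define \<epsilon>2 :: 'a where "\<epsilon>2 = (- 1) ^ ((?p i + ?p l) * (?p k + ?p j))"
  define A :: 'a where "A = (- 1) ^ (?p j * (?p k + ?p l))"
  define B :: 'a where "B = (- 1) ^ (?p j * ?p l) * (- 1) ^ (?p l * (?p k + ?p j))"
  define si :: 'a where "si = (- 1) ^ ?p i"
  define sk :: 'a where "sk = (- 1) ^ ?p k"
  have par: "?p i = 0 \<or> ?p i = 1" "?p k = 0 \<or> ?p k = 1" "?p j = 0 \<or> ?p j = 1" "?p l = 0 \<or> ?p l = 1"
    using par_cases by auto
  have defect: "manin_defect (\<lambda>a b c f. (- 1) ^ (?p c * (?p b + ?p f)) * (?T a c * ?T b f)) ?p i k j l
      = A * (?T i j * ?T k l - \<epsilon>1 * (?T k l * ?T i j)) + B * (?T i l * ?T k j - \<epsilon>2 * (?T k j * ?T i l))"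
    unfolding A_def B_def \<epsilon>1_def \<epsilon>2_def using par
    by (elim disjE; simp add: manin_defect_def algebra_simps)
  have regroup: "A * (a1 - a2 + s * (t * (a3 - x * a4))) + B * (b1 - b2 + s * (t * (b3 - y * b4)))
      = (A * a1 - B * (s * (t * (y * b4)))) + (B * (s * (t * b3)) - A * a2) + (A * (s * (t * a3)) - B * b2)
        + (B * b1 - A * (s * (t * (x * a4))))" for A B a1 a2 a3 a4 b1 b2 b3 b4 s t x y :: 'a
    by (simp add: algebra_simps)
  have "A * (if i = j then sk * e k l 2 else 0) - B * (si * (sk * (\<epsilon>2 * (if j = i then e k l 2 else 0)))) = 0"
    using par unfolding A_def B_def si_def sk_def \<epsilon>2_def by (cases "i = j"; elim disjE; simp)
  moreover have "B * (si * (sk * (if l = k then e i j 2 else 0))) - A * (if k = l then si * e i j 2 else 0) = 0"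
    using par unfolding A_def B_def si_def sk_def by (cases "k = l"; elim disjE; simp)
  moreover have "A * (si * (sk * (if j = k then e i l 2 else 0))) - B * (if k = j then si * e i l 2 else 0) = 0"
    using par unfolding A_def B_def si_def sk_def by (cases "k = j"; elim disjE; simp)
  moreover have "B * (if i = l then sk * e k j 2 else 0) - A * (si * (sk * (\<epsilon>1 * (if l = i then e k j 2 else 0)))) = 0"
    using par unfolding A_def B_def si_def sk_def \<epsilon>1_def by (cases "i = l"; elim disjE; simp)
  ultimately show ?thesis
    unfolding defect Tmat_supercommutator[OF G idx(1,3,2,4), folded \<epsilon>1_def si_def sk_def]
      Tmat_supercommutator[OF G idx(1,4,2,3), folded \<epsilon>2_def si_def sk_def] regroup
    by simp
qed

lemma super_manin_oneuT:
  fixes e :: "nat \<Rightarrow> nat \<Rightarrow> nat \<Rightarrow> 'a::ring_1"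
  assumes G: "gen_rels m n e tau"
  shows "super_manin (m + n) (par m) (oneuT m e tau)"
  unfolding super_manin_def
proof (intro allI impI)
  fix i k j l
  assume idx: "i < m + n" "k < m + n" "j < m + n" "l < m + n"
  let ?p = "par m" and ?X = "oneuT m e tau"
  have par: "?p i = 0 \<or> ?p i = 1" "?p k = 0 \<or> ?p k = 1" "?p j = 0 \<or> ?p j = 1" "?p l = 0 \<or> ?p l = 1"
    using par_cases by auto
  have "manin_defect (\<lambda>a b c f. (- 1) ^ (?p c * (?p b + ?p f)) * (?X a c * ?X b f) $ d) ?p i k j l = 0" for d
  proof -
    consider "d = 0" | "d = 1" | "d = 2" | "d \<ge> 3" by linarith
    then show ?thesis
    proof cases
      case 1
      then show ?thesis
        unfolding oneuT_mult_coeff using par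
        by (elim disjE; simp add: manin_defect_def; cases "i = j"; cases "k = l"; cases "i = l"; cases "k = j"; simp)
    next
      case 2
      then show ?thesis
        unfolding oneuT_mult_coeff using par
        by (elim disjE; simp add: manin_defect_def; cases "i = j"; cases "k = l"; cases "i = l"; cases "k = j"; simp)
    next
      case 3
      then show ?thesis
        unfolding oneuT_mult_coeff using manin_defect_Tmat[OF G idx] by simp
    next
      case 4
      then show ?thesis
        unfolding oneuT_mult_coeff by (simp add: manin_defect_def)
    qed
  qed
  then show "manin_defect (stensor_coeff ?p ?X) ?p i k j l = 0"
    by (intro fps_ext) (simp add: manin_defect_fps_nth stensor_coeff_def fps_nth_neg_one_power_mult)
qed

theorem proposition3p1:
  fixes m n :: nat
    and e :: "nat \<Rightarrow> nat \<Rightarrow> nat \<Rightarrow> 'a::real_algebra_1"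
    and tau :: 'a
    and \<sigma> :: "nat \<Rightarrow> nat"
  assumes "m \<ge> 1"
    and "gen_rels m n e tau"
    and "\<sigma> permutes {..<m+n}"
  shows "Ber (m+n) (\<lambda>i. par m (inv \<sigma> i))
            (\<lambda>i j. oneuT m e tau (inv \<sigma> i) (inv \<sigma> j))
       = Ber (m+n) (par m) (oneuT m e tau)"
proof (rule Ber_permute)
  show "const_id {..<m + n} (oneuT m e tau)" by (rule const_id_oneuT)
  show "super_manin (m + n) (par m) (oneuT m e tau)" using assms(2) by (rule super_manin_oneuT)
  show "par m i \<le> 1" for i using par_cases[of m i] by auto
  show "inv \<sigma> permutes {..<m + n}" using assms(3) by (rule permutes_inv)
qed

end
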